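(* Let $M$ and $M'$ be matroids on the same finite ground set $S$, both of rank $r$, such that the circuits of $M$ of cardinality at most $r$ are exactly the circuits of $M'$ of cardinality at most $r$. Then $M=M'$. *)

theory Defs
  imports Main
begin

definition matroid :: "'a set \<Rightarrow> ('a set \<Rightarrow> bool) \<Rightarrow> bool" where
  "matroid S indep \<longleftrightarrow>
     finite S \<and>
     (\<forall>X. indep X \<longrightarrow> X \<subseteq> S) \<and>
     indep {} \<and>
     (\<forall>X Y. indep X \<and> Y \<subseteq> X \<longrightarrow> indep Y) \<and>
     (\<forall>X Y. indep X \<and> indep Y \<and> card X < card Y \<longrightarrow>
        (\<exists>e \<in> Y - X. indep (insert e X)))"

definition circuit :: "'a set \<Rightarrow> ('a set \<Rightarrow> bool) \<Rightarrow> 'a set \<Rightarrow> bool" where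
  "circuit S indep C \<longleftrightarrow> C \<subseteq> S \<and> \<not> indep C \<and> (\<forall>D. D \<subset> C \<longrightarrow> indep D)"

definition matroid_rank :: "'a set \<Rightarrow> ('a set \<Rightarrow> bool) \<Rightarrow> nat" where
  "matroid_rank S indep = Max {card X | X. X \<subseteq> S \<and> indep X}"

end

theory Submission
  imports Defs
begin

text \<open>If \<open>X\<close> is independent in \<open>M\<close> but dependent in \<open>M'\<close>, it contains a circuit
  of \<open>M'\<close>. That circuit has at most \<open>card X \<le> r\<close> elements, so it is also a circuit
  of \<open>M\<close>; but every subset of \<open>X\<close> is independent in \<open>M\<close>. By symmetry \<open>M\<close> and
  \<open>M'\<close> have the same independent sets.\<close>

lemma matroid_finite: "matroid S I \<Longrightarrow> finite S"
  by (simp add: matroid_def)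

lemma matroid_indep_subset: "matroid S I \<Longrightarrow> I X \<Longrightarrow> X \<subseteq> S"
  by (simp add: matroid_def)

lemma matroid_indep_mono: "matroid S I \<Longrightarrow> I X \<Longrightarrow> Y \<subseteq> X \<Longrightarrow> I Y"
  unfolding matroid_def by (elim conjE) blast

lemma matroid_indep_card_le_rank:
  assumes "matroid S I" "I X"
  shows "card X \<le> matroid_rank S I"
proof -
  have "finite {X. X \<subseteq> S \<and> I X}"
    by (rule finite_subset[of _ "Pow S"]) (auto simp: matroid_finite[OF assms(1)])
  then have "finite {card X | X. X \<subseteq> S \<and> I X}"
    by (simp add: setcompr_eq_image)
  moreover have "card X \<in> {card X | X. X \<subseteq> S \<and> I X}"
    using assms matroid_indep_subset by blast
  ultimately show ?thesis
    unfolding matroid_rank_def by (rule Max_ge)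
qed

lemma dependent_contains_circuit:
  assumes "finite X" "X \<subseteq> S" "\<not> I X"
  obtains C where "C \<subseteq> X" "circuit S I C"
proof -
  define dep where "dep = {C. C \<subseteq> X \<and> \<not> I C}"
  have "finite dep"
    unfolding dep_def using assms(1) by simp
  moreover have "dep \<noteq> {}"
    unfolding dep_def using assms(3) by blast
  ultimately obtain C where "C \<in> dep" and minimal: "\<forall>D\<in>dep. D \<subseteq> C \<longrightarrow> C = D"
    using finite_has_minimal by blast
  then have "C \<subseteq> X" "\<not> I C"
    unfolding dep_def by simp_all
  have "I D" if "D \<subset> C" for D
    using that \<open>C \<subseteq> X\<close> minimal unfolding dep_def by blast
  then have "circuit S I C"
    unfolding circuit_def using \<open>C \<subseteq> X\<close> \<open>\<not> I C\<close> assms(2) by blast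
  with \<open>C \<subseteq> X\<close> show ?thesis by (rule that)
qed

lemma indep_if_small_circuits_are_circuits:
  assumes M: "matroid S I" and "I X"
    and small_circuits: "\<And>C. card C \<le> matroid_rank S I \<Longrightarrow> circuit S J C \<Longrightarrow> circuit S I C"
  shows "J X"
proof (rule ccontr)
  assume "\<not> J X"
  have "X \<subseteq> S"
    using M \<open>I X\<close> by (rule matroid_indep_subset)
  then have "finite X"
    using matroid_finite[OF M] by (rule finite_subset)
  then obtain C where "C \<subseteq> X" "circuit S J C"
    using \<open>X \<subseteq> S\<close> \<open>\<not> J X\<close> by (rule dependent_contains_circuit)
  have "card C \<le> card X"
    using \<open>finite X\<close> \<open>C \<subseteq> X\<close> by (rule card_mono)
  also have "\<dots> \<le> matroid_rank S I"
    using M \<open>I X\<close> by (rule matroid_indep_card_le_rank)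
  finally have "circuit S I C"
    using \<open>circuit S J C\<close> by (rule small_circuits)
  moreover have "I C"
    using M \<open>I X\<close> \<open>C \<subseteq> X\<close> by (rule matroid_indep_mono)
  ultimately show False
    unfolding circuit_def by blast
qed

theorem proposition2p2:
  fixes S :: "'a set" and indep indep' :: "'a set \<Rightarrow> bool" and r :: nat
  assumes "matroid S indep" and "matroid S indep'"
    and "matroid_rank S indep = r" and "matroid_rank S indep' = r"
    and "\<And>C. card C \<le> r \<Longrightarrow> (circuit S indep C \<longleftrightarrow> circuit S indep' C)"
  shows "indep = indep'"
proof (rule ext, rule iffI)
  fix X
  show "indep' X" if "indep X"
    using assms(1) that
  proof (rule indep_if_small_circuits_are_circuits)
    show "circuit S indep C" if "card C \<le> matroid_rank S indep" "circuit S indep' C" for C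
      using that assms(3,5) by metis
  qed
  show "indep X" if "indep' X"
    using assms(2) that
  proof (rule indep_if_small_circuits_are_circuits)
    show "circuit S indep' C" if "card C \<le> matroid_rank S indep'" "circuit S indep C" for C
      using that assms(4,5) by metis
  qed
qed

end
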